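(* For every positive integer $k$: (1) $\lim_{x\to\infty}F^k(x)=k^2-1$; (2) if $k\geq 2$, then $F^k$ is concave down on the interval $(2(k-1),\infty)$; (3) if $k\geq 3$, then $F^k(2(k-1))=F^{k-2}(2(k-1))$.
   Context: For a positive integer $k$, define $F^k:(0,\infty)\to\mathbb{R}$ by $F^k(x)=\delta_0^k(x)-k(x-k)-1$, where $\delta_0^k(x)=2x\sum_{j=1}^{k/2}\cos\left(\frac{(k-(2j-1))\pi}{x}\right)$ if $k$ is even, and $\delta_0^k(x)=x+2x\sum_{j=1}^{(k-1)/2}\cos\left(\frac{(k-(2j-1))\pi}{x}\right)$ if $k$ is odd (an empty sum is $0$). *)

theory Defs
  imports "HOL-Analysis.Analysis"
begin

definition delta0 :: "nat \<Rightarrow> real \<Rightarrow> real" where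
  "delta0 k x =
     (if even k
      then 2 * x * (\<Sum>j=1..k div 2. cos ((real k - (2 * real j - 1)) * pi / x))
      else x + 2 * x * (\<Sum>j=1..(k - 1) div 2. cos ((real k - (2 * real j - 1)) * pi / x)))"

definition F :: "nat \<Rightarrow> real \<Rightarrow> real" where
  "F k x = delta0 k x - real k * (x - real k) - 1"

end

theory Submission
  imports Defs "HOL-Real_Asymp.Real_Asymp"
begin

(* Apart from an affine part, F k is a sum of k div 2 terms x cos(a pi / x) with
   0 < a \<le> k - 1.  Each such term is x + O(1/x) at infinity, and the affine part
   cancels these x's, leaving k^2 - 1.  The second derivative of x cos(a pi / x) is
   -(a pi)^2 cos(a pi / x) / x^3, which is nonpositive as long as a pi / x \<le> pi / 2,
   i.e. x \<ge> 2a.  At x = 2(k - 1) the term with a = k - 1 vanishes, and the remaining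
   terms are exactly those of F (k - 2). *)

definition cos_term :: "real \<Rightarrow> real \<Rightarrow> real" where
  "cos_term a x = x * cos (a * pi / x)"

lemma tendsto_cos_term_minus_ident: "((\<lambda>x. cos_term a x - x) \<longlongrightarrow> 0) at_top"
  unfolding cos_term_def by real_asymp

lemma cos_term_double: "cos_term a (2 * a) = 0"
  by (cases "a = 0") (simp_all add: cos_term_def)

lemma has_real_derivative_cos_term:
  assumes "x \<noteq> 0"
  shows "(cos_term a has_real_derivative cos (a * pi / x) + a * pi / x * sin (a * pi / x)) (at x)"
  unfolding cos_term_def[abs_def] using assms
  by (auto intro!: derivative_eq_intros simp: field_simps power2_eq_square)

lemma has_real_derivative_cos_term_deriv:
  assumes "x \<noteq> 0"
  shows "((\<lambda>x. cos (a * pi / x) + a * pi / x * sin (a * pi / x)) has_real_derivative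
           - ((a * pi)\<^sup>2 * cos (a * pi / x) / x ^ 3)) (at x)"
  using assms
  by (auto intro!: derivative_eq_intros simp: field_simps power2_eq_square power3_eq_cube)

lemma concave_on_cos_term: "concave_on {2 * \<bar>a\<bar><..} (cos_term a)"
proof (rule f''_le0_imp_concave)
  fix x assume "x \<in> {2 * \<bar>a\<bar><..}"
  then have "x > 0" and "\<bar>a\<bar> * pi / x \<le> pi / 2"
    by (auto simp: field_simps)
  then have "\<bar>a * pi / x\<bar> \<le> pi / 2"
    by (simp add: abs_mult)
  then have "cos (a * pi / x) \<ge> 0"
    by (meson abs_le_D1 abs_le_D2 cos_ge_zero minus_le_iff)
  with \<open>x > 0\<close> show "- ((a * pi)\<^sup>2 * cos (a * pi / x) / x ^ 3) \<le> 0"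
    by simp
qed (auto intro: has_real_derivative_cos_term has_real_derivative_cos_term_deriv)

lemma concave_on_subset: "concave_on T f \<Longrightarrow> S \<subseteq> T \<Longrightarrow> convex S \<Longrightarrow> concave_on S f"
  unfolding concave_on_def by (rule convex_on_subset)

lemma concave_on_sum_fun:
  assumes "finite I" "convex S" "\<And>i. i \<in> I \<Longrightarrow> concave_on S (f i)"
  shows "concave_on S (\<lambda>x. \<Sum>i\<in>I. f i x)"
  using assms by (induction I rule: finite_induct) (auto simp: concave_on_const concave_on_add)

lemma concave_on_affine:
  fixes c d :: real
  assumes "convex S"
  shows "concave_on S (\<lambda>x. c * x + d)"
proof -
  have "u * (c * x + d) + v * (c * y + d) = c * (u * x + v * y) + (u + v) * d" for u v x y :: real
    by (simp add: algebra_simps)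
  with assms show ?thesis
    by (simp add: concave_on_iff)
qed

lemma delta0_eq_cos_terms:
  "delta0 k x = of_bool (odd k) * x + 2 * (\<Sum>j=1..k div 2. cos_term (real k - (2 * real j - 1)) x)"
proof (cases "even k")
  case True
  then show ?thesis
    by (simp add: delta0_def cos_term_def sum_distrib_left mult.assoc)
next
  case False
  then have "(k - 1) div 2 = k div 2"
    by presburger
  with False show ?thesis
    by (simp add: delta0_def cos_term_def sum_distrib_left mult.assoc)
qed

lemma F_eq_cos_terms:
  "F k x = of_bool (odd k) * x + 2 * (\<Sum>j=1..k div 2. cos_term (real k - (2 * real j - 1)) x)
     - real k * (x - real k) - 1"
  by (simp add: F_def delta0_eq_cos_terms)

lemma F_tendsto: "(F k \<longlongrightarrow> real k ^ 2 - 1) at_top"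
proof -
  have "2 * (k div 2) + of_bool (odd k) = k"
    using mult_div_mod_eq[of 2 k] by (simp add: mod_2_eq_odd)
  then have "real k = real (2 * (k div 2) + of_bool (odd k))"
    by (simp only:)
  then have parity: "of_bool (odd k) = real k - 2 * real (k div 2)"
    by simp
  have affine: "(real k - 2 * n) * x + 2 * S - real k * (x - real k) - 1 = 2 * (S - n * x) + (real k ^ 2 - 1)"
    for n S x :: real
    by (simp add: algebra_simps power2_eq_square)
  have "F k = (\<lambda>x. 2 * (\<Sum>j=1..k div 2. cos_term (real k - (2 * real j - 1)) x - x)
                  + (real k ^ 2 - 1))"
    by (simp add: fun_eq_iff F_eq_cos_terms parity affine sum_subtractf)
  moreover have "((\<lambda>x. 2 * (\<Sum>j=1..k div 2. cos_term (real k - (2 * real j - 1)) x - x)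
                       + (real k ^ 2 - 1)) \<longlongrightarrow> 2 * (\<Sum>j=1..k div 2. 0) + (real k ^ 2 - 1)) at_top"
    by (intro tendsto_intros tendsto_cos_term_minus_ident)
  ultimately show ?thesis
    by simp
qed

lemma F_concave: "concave_on {2 * (real k - 1)<..} (F k)"
proof -
  let ?S = "{2 * (real k - 1)<..}"
  have "concave_on ?S (cos_term (real k - (2 * real j - 1)))" if "j \<in> {1..k div 2}" for j
  proof (rule concave_on_subset[OF concave_on_cos_term])
    show "?S \<subseteq> {2 * \<bar>real k - (2 * real j - 1)\<bar><..}"
      using that by auto
  qed simp
  then have "concave_on ?S (\<lambda>x. 2 * (\<Sum>j=1..k div 2. cos_term (real k - (2 * real j - 1)) x)
                               + ((of_bool (odd k) - real k) * x + (real k ^ 2 - 1)))"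
    by (intro concave_on_add concave_on_cmul concave_on_sum_fun concave_on_affine) auto
  moreover have "F k = (\<lambda>x. 2 * (\<Sum>j=1..k div 2. cos_term (real k - (2 * real j - 1)) x)
                               + ((of_bool (odd k) - real k) * x + (real k ^ 2 - 1)))"
    by (auto simp: F_eq_cos_terms algebra_simps power2_eq_square)
  ultimately show ?thesis
    by simp
qed

lemma F_at_double_pred:
  assumes "k \<ge> 2"
  shows "F k (2 * (real k - 1)) = F (k - 2) (2 * (real k - 1))"
proof -
  define m where "m = k - 2"
  have k: "k = m + 2"
    using assms by (simp add: m_def)
  let ?x = "2 * (real k - 1)"
  have "(\<Sum>j=1..k div 2. cos_term (real k - (2 * real j - 1)) ?x)
        = cos_term (real k - 1) ?x + (\<Sum>j=1..m div 2. cos_term (real k - (2 * real (Suc j) - 1)) ?x)"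
    unfolding k by (simp add: sum.atLeast_Suc_atMost sum.atLeast_Suc_atMost_Suc_shift del: sum.cl_ivl_Suc)
  also have "cos_term (real k - 1) ?x = 0"
    using cos_term_double[of "real k - 1"] by simp
  also have "(\<Sum>j=1..m div 2. cos_term (real k - (2 * real (Suc j) - 1)) ?x)
             = (\<Sum>j=1..m div 2. cos_term (real m - (2 * real j - 1)) ?x)"
    by (simp add: k algebra_simps)
  finally show ?thesis
    by (simp add: F_eq_cos_terms k algebra_simps)
qed

theorem lemma3p3:
  fixes k :: nat
  assumes "k \<ge> 1"
  shows "(F k \<longlongrightarrow> real k ^ 2 - 1) at_top
    \<and> (k \<ge> 2 \<longrightarrow> concave_on {2 * (real k - 1)<..} (F k))
    \<and> (k \<ge> 3 \<longrightarrow> F k (2 * (real k - 1)) = F (k - 2) (2 * (real k - 1)))"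
  using F_tendsto F_concave F_at_double_pred by simp

end
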